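(* Let $\mathbb E$ be a finite-dimensional Euclidean space, let $\lambda\in[0,1]$ be fixed, and for $j=1,2$ let $B_j\subset\mathbb E$ be such that the reflector $R_{B_j}$ is pointwise almost nonexpansive with violation $\tilde\epsilon_j$ at all points of $\Lambda_j$ on $U_j$ (where $\Lambda_j,U_j\subset\mathbb E$). Suppose $R_{B_2}\Lambda_2\subseteq\Lambda_1$ and $R_{B_2}U_2\subseteq U_1$. Then the relaxed Douglas–Rachford mapping $$T=\tfrac{\lambda}{2}(R_{B_1}R_{B_2}+\mathrm{Id})+(1-\lambda)P_{B_2}$$ is pointwise almost $\alpha$-firmly nonexpansive at all $y\in\Lambda_2$ on $U_2$ with constant $\alpha=1/2$ and violation $$\tilde\epsilon=\tfrac12\Big[\big(\lambda\sqrt{1+\tilde\epsilon_1}+1-\lambda\big)^2(1+\tilde\epsilon_2)-1\Big].$$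
   Context: For a nonempty closed set $B$, $P_Bx=\operatorname{argmin}_{b\in B}\|b-x\|$ (set-valued in general), $R_B=2P_B-\mathrm{Id}$. For set-valued maps, composition is $TQx=\bigcup_{z\in Qx}Tz$, and sums and scalar multiples are taken elementwise; for a set $S$, $TS=\bigcup_{a\in S}Ta$. A map $T$ is pointwise almost nonexpansive at $y$ on $U$ with violation $\epsilon\in[0,1)$ if $\|x^+-y^+\|\le\sqrt{1+\epsilon}\|x-y\|$ for all $x\in U$, $x^+\in Tx$, $y^+\in Ty$. It is pointwise almost $\alpha$-firmly nonexpansive at $y$ on $U$ with constant $\alpha\in(0,1)$ and violation $\epsilon\in[0,1)$ if $\|x^+-y^+\|^2\le(1+\epsilon)\|x-y\|^2-\frac{1-\alpha}{\alpha}\|(x^+-x)-(y^+-y)\|^2$ for all $x\in U$, $x^+\in Tx$, $y^+\in Ty$. *)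

theory Defs
  imports "HOL-Analysis.Analysis"
begin

definition proj :: "'a::real_normed_vector set \<Rightarrow> 'a \<Rightarrow> 'a set" where
  "proj B x = {b \<in> B. \<forall>c\<in>B. norm (b - x) \<le> norm (c - x)}"

definition reflector :: "'a::real_normed_vector set \<Rightarrow> 'a \<Rightarrow> 'a set" where
  "reflector B x = (\<lambda>p. 2 *\<^sub>R p - x) ` proj B x"

definition svcomp :: "('a \<Rightarrow> 'a set) \<Rightarrow> ('a \<Rightarrow> 'a set) \<Rightarrow> 'a \<Rightarrow> 'a set" where
  "svcomp T Q x = (\<Union>z\<in>Q x. T z)"

definition svimage :: "('a \<Rightarrow> 'a set) \<Rightarrow> 'a set \<Rightarrow> 'a set" where
  "svimage T S = (\<Union>a\<in>S. T a)"

definition rdr :: "real \<Rightarrow> 'a::real_normed_vector set \<Rightarrow> 'a set \<Rightarrow> 'a \<Rightarrow> 'a set" where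
  "rdr lam B1 B2 x = {(lam / 2) *\<^sub>R (a + x) + (1 - lam) *\<^sub>R p | a p.
      a \<in> svcomp (reflector B1) (reflector B2) x \<and> p \<in> proj B2 x}"

definition almost_nonexp :: "('a::real_normed_vector \<Rightarrow> 'a set) \<Rightarrow> 'a \<Rightarrow> 'a set \<Rightarrow> real \<Rightarrow> bool" where
  "almost_nonexp T y U eps \<longleftrightarrow>
     (\<forall>x\<in>U. \<forall>xp\<in>T x. \<forall>yp\<in>T y. norm (xp - yp) \<le> sqrt (1 + eps) * norm (x - y))"

definition almost_afne :: "('a::real_normed_vector \<Rightarrow> 'a set) \<Rightarrow> 'a \<Rightarrow> 'a set \<Rightarrow> real \<Rightarrow> real \<Rightarrow> bool" where
  "almost_afne T y U alpha eps \<longleftrightarrow>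
     (\<forall>x\<in>U. \<forall>xp\<in>T x. \<forall>yp\<in>T y.
        (norm (xp - yp))\<^sup>2 \<le> (1 + eps) * (norm (x - y))\<^sup>2
          - (1 - alpha) / alpha * (norm ((xp - x) - (yp - y)))\<^sup>2)"

end

theory Submission
  imports Defs
begin

text \<open>For \<open>\<alpha> = 1/2\<close> the firmness inequality for \<open>T\<close> is, by the parallelogram law, the same
  as almost nonexpansiveness of the reflection \<open>2T - Id\<close> with doubled violation. For the relaxed
  Douglas-Rachford map, \<open>2T - Id = \<lambda> R\<^sub>B\<^sub>1 R\<^sub>B\<^sub>2 + (1 - \<lambda>) R\<^sub>B\<^sub>2\<close>; the composition \<open>R\<^sub>B\<^sub>1 R\<^sub>B\<^sub>2\<close> has
  Lipschitz constant \<open>\<surd>(1+\<epsilon>\<^sub>1) \<surd>(1+\<epsilon>\<^sub>2)\<close>, and the convex combination has Lipschitz constant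
  \<open>(\<lambda> \<surd>(1+\<epsilon>\<^sub>1) + 1 - \<lambda>) \<surd>(1+\<epsilon>\<^sub>2)\<close>, and its square is \<open>1 + 2\<epsilon>\<close>.\<close>

definition svreflect :: "('a::real_vector \<Rightarrow> 'a set) \<Rightarrow> 'a \<Rightarrow> 'a set" where
  "svreflect T x = (\<lambda>v. 2 *\<^sub>R v - x) ` T x"

definition svcomb :: "real \<Rightarrow> ('a::real_vector \<Rightarrow> 'a set) \<Rightarrow> ('a \<Rightarrow> 'a set) \<Rightarrow> 'a \<Rightarrow> 'a set" where
  "svcomb lam T S x = {lam *\<^sub>R a + (1 - lam) *\<^sub>R b | a b. a \<in> T x \<and> b \<in> S x}"

lemma parallelogram_law_reflection:
  fixes u v :: "'a::real_inner"
  shows "(norm v)\<^sup>2 + (norm (v - u))\<^sup>2 = ((norm u)\<^sup>2 + (norm (2 *\<^sub>R v - u))\<^sup>2) / 2"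
  by (simp add: power2_norm_eq_inner inner_simps algebra_simps)

lemma norm_le_sqrt_mult_iff:
  fixes a u :: "'a::real_normed_vector"
  assumes "0 \<le> c"
  shows "norm a \<le> sqrt c * norm u \<longleftrightarrow> (norm a)\<^sup>2 \<le> c * (norm u)\<^sup>2"
proof -
  have "sqrt c * norm u = sqrt (c * (norm u)\<^sup>2)"
    by (simp add: real_sqrt_mult)
  moreover have "norm a = sqrt ((norm a)\<^sup>2)"
    by simp
  ultimately show ?thesis
    by (metis real_sqrt_le_iff)
qed

lemma almost_afne_half_iff_svreflect:
  fixes T :: "'a::real_inner \<Rightarrow> 'a set"
  assumes "-1/2 \<le> eps"
  shows "almost_afne T y U (1/2) eps \<longleftrightarrow> almost_nonexp (svreflect T) y U (2 * eps)"
proof -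
  have pointwise: "(norm (xp - yp))\<^sup>2 \<le> (1 + eps) * (norm (x - y))\<^sup>2
        - (1 - 1/2) / (1/2) * (norm ((xp - x) - (yp - y)))\<^sup>2
      \<longleftrightarrow> norm ((2 *\<^sub>R xp - x) - (2 *\<^sub>R yp - y)) \<le> sqrt (1 + 2 * eps) * norm (x - y)"
    for x xp yp :: 'a
  proof -
    define d u where "d = xp - yp" and "u = x - y"
    have eqs: "xp - yp = d" "(xp - x) - (yp - y) = d - u"
      "(2 *\<^sub>R xp - x) - (2 *\<^sub>R yp - y) = 2 *\<^sub>R d - u" "x - y = u"
      unfolding d_def u_def by (simp_all add: algebra_simps)
    have "0 \<le> 1 + 2 * eps"
      using assms by simp
    then show ?thesis
      unfolding eqs norm_le_sqrt_mult_iff[OF \<open>0 \<le> 1 + 2 * eps\<close>]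
      using parallelogram_law_reflection[of d u] by (simp add: algebra_simps) (intro iffI; linarith)
  qed
  show ?thesis
    unfolding almost_afne_def pointwise almost_nonexp_def svreflect_def by simp
qed

lemma almost_nonexp_svcomp:
  assumes Q: "almost_nonexp Q y U e2"
    and T: "\<forall>z\<in>Q y. almost_nonexp T z V e1"
    and QU: "svimage Q U \<subseteq> V"
    and "-1 \<le> e1"
  shows "almost_nonexp (svcomp T Q) y U ((1 + e1) * (1 + e2) - 1)"
  unfolding almost_nonexp_def
proof (intro ballI)
  fix x a a' assume x: "x \<in> U" and "a \<in> svcomp T Q x" and "a' \<in> svcomp T Q y"
  then obtain z z' where z: "z \<in> Q x" "a \<in> T z" and z': "z' \<in> Q y" "a' \<in> T z'"
    unfolding svcomp_def by blast
  have "z \<in> V"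
    using QU x z unfolding svimage_def by blast
  then have "norm (a - a') \<le> sqrt (1 + e1) * norm (z - z')"
    using T z z' unfolding almost_nonexp_def by blast
  also have "\<dots> \<le> sqrt (1 + e1) * (sqrt (1 + e2) * norm (x - y))"
    using Q x z z' \<open>-1 \<le> e1\<close> unfolding almost_nonexp_def by (simp add: mult_left_mono)
  finally show "norm (a - a') \<le> sqrt (1 + ((1 + e1) * (1 + e2) - 1)) * norm (x - y)"
    by (simp add: real_sqrt_mult)
qed

lemma almost_nonexp_svcomb:
  fixes T S :: "'a::real_normed_vector \<Rightarrow> 'a set"
  assumes "0 \<le> lam" "lam \<le> 1"
    and T: "almost_nonexp T y U eT" and S: "almost_nonexp S y U eS"
    and "-1 \<le> eT" "-1 \<le> eS"
  shows "almost_nonexp (svcomb lam T S) y U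
           ((lam * sqrt (1 + eT) + (1 - lam) * sqrt (1 + eS))\<^sup>2 - 1)"
  unfolding almost_nonexp_def
proof (intro ballI)
  fix x c c' assume x: "x \<in> U" and "c \<in> svcomb lam T S x" and "c' \<in> svcomb lam T S y"
  then obtain a b a' b' where c: "c = lam *\<^sub>R a + (1 - lam) *\<^sub>R b" "a \<in> T x" "b \<in> S x"
    and c': "c' = lam *\<^sub>R a' + (1 - lam) *\<^sub>R b'" "a' \<in> T y" "b' \<in> S y"
    unfolding svcomb_def by blast
  have "c - c' = lam *\<^sub>R (a - a') + (1 - lam) *\<^sub>R (b - b')"
    unfolding c c' by (simp add: algebra_simps)
  then have "norm (c - c') \<le> lam * norm (a - a') + (1 - lam) * norm (b - b')"
    using assms(1,2) by (metis abs_of_nonneg diff_ge_0_iff_ge norm_scaleR norm_triangle_ineq)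
  also have "\<dots> \<le> lam * (sqrt (1 + eT) * norm (x - y)) + (1 - lam) * (sqrt (1 + eS) * norm (x - y))"
    using T S x c c' assms(1,2) unfolding almost_nonexp_def
    by (intro add_mono mult_left_mono) auto
  also have "\<dots> = (lam * sqrt (1 + eT) + (1 - lam) * sqrt (1 + eS)) * norm (x - y)"
    by (simp add: algebra_simps)
  also have "\<dots> = \<bar>lam * sqrt (1 + eT) + (1 - lam) * sqrt (1 + eS)\<bar> * norm (x - y)"
    using assms by simp
  finally show "norm (c - c') \<le>
      sqrt (1 + ((lam * sqrt (1 + eT) + (1 - lam) * sqrt (1 + eS))\<^sup>2 - 1)) * norm (x - y)"
    by simp
qed

lemma svreflect_rdr:
  "svreflect (rdr lam B1 B2) = svcomb lam (svcomp (reflector B1) (reflector B2)) (reflector B2)"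
proof (intro ext set_eqI)
  fix x w
  have reflect: "2 *\<^sub>R ((lam / 2) *\<^sub>R (a + x) + (1 - lam) *\<^sub>R p) - x
      = lam *\<^sub>R a + (1 - lam) *\<^sub>R (2 *\<^sub>R p - x)" for a p :: 'a
    by (simp add: algebra_simps)
  have "w \<in> svreflect (rdr lam B1 B2) x \<longleftrightarrow>
      (\<exists>a p. w = lam *\<^sub>R a + (1 - lam) *\<^sub>R (2 *\<^sub>R p - x)
        \<and> a \<in> svcomp (reflector B1) (reflector B2) x \<and> p \<in> proj B2 x)"
    unfolding svreflect_def rdr_def image_iff by (auto simp: reflect) (blast, metis reflect)
  also have "\<dots> \<longleftrightarrow> w \<in> svcomb lam (svcomp (reflector B1) (reflector B2)) (reflector B2) x"
    unfolding svcomb_def reflector_def by blast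
  finally show "w \<in> svreflect (rdr lam B1 B2) x
      \<longleftrightarrow> w \<in> svcomb lam (svcomp (reflector B1) (reflector B2)) (reflector B2) x" .
qed

theorem lemma3:
  fixes B1 B2 \<Lambda>1 \<Lambda>2 U1 U2 :: "'a::euclidean_space set"
    and lam e1 e2 :: real
  assumes lam: "0 \<le> lam" "lam \<le> 1"
    and B1: "closed B1" "B1 \<noteq> {}"
    and B2: "closed B2" "B2 \<noteq> {}"
    and e1: "0 \<le> e1" "e1 < 1"
    and e2: "0 \<le> e2" "e2 < 1"
    and R1: "\<forall>y\<in>\<Lambda>1. almost_nonexp (reflector B1) y U1 e1"
    and R2: "\<forall>y\<in>\<Lambda>2. almost_nonexp (reflector B2) y U2 e2"
    and incl\<Lambda>: "svimage (reflector B2) \<Lambda>2 \<subseteq> \<Lambda>1"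
    and inclU: "svimage (reflector B2) U2 \<subseteq> U1"
  shows "\<forall>y\<in>\<Lambda>2. almost_afne (rdr lam B1 B2) y U2 (1/2)
           ((1/2) * ((lam * sqrt (1 + e1) + 1 - lam)\<^sup>2 * (1 + e2) - 1))"
proof
  fix y assume y: "y \<in> \<Lambda>2"
  define L where "L = (lam * sqrt (1 + e1) + 1 - lam)\<^sup>2 * (1 + e2)"
  have R2y: "almost_nonexp (reflector B2) y U2 e2"
    using R2 y by blast
  have "\<forall>z\<in>reflector B2 y. almost_nonexp (reflector B1) z U1 e1"
    using R1 incl\<Lambda> y unfolding svimage_def by blast
  then have "almost_nonexp (svcomp (reflector B1) (reflector B2)) y U2 ((1 + e1) * (1 + e2) - 1)"
    using almost_nonexp_svcomp[OF R2y _ inclU] e1 by simp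
  then have "almost_nonexp (svreflect (rdr lam B1 B2)) y U2
      ((lam * sqrt (1 + ((1 + e1) * (1 + e2) - 1)) + (1 - lam) * sqrt (1 + e2))\<^sup>2 - 1)"
    unfolding svreflect_rdr using lam R2y e1 e2 by (intro almost_nonexp_svcomb) auto
  moreover have "lam * sqrt (1 + ((1 + e1) * (1 + e2) - 1)) + (1 - lam) * sqrt (1 + e2)
      = (lam * sqrt (1 + e1) + 1 - lam) * sqrt (1 + e2)"
    by (simp add: real_sqrt_mult [symmetric] algebra_simps)
  ultimately have "almost_nonexp (svreflect (rdr lam B1 B2)) y U2 (L - 1)"
    using e2 by (simp add: L_def power_mult_distrib)
  moreover have "-1/2 \<le> (1/2) * (L - 1)" "2 * ((1/2) * (L - 1)) = L - 1"
    using e2 by (simp_all add: L_def)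
  ultimately have "almost_afne (rdr lam B1 B2) y U2 (1/2) ((1/2) * (L - 1))"
    by (simp only: almost_afne_half_iff_svreflect)
  then show "almost_afne (rdr lam B1 B2) y U2 (1/2)
      ((1/2) * ((lam * sqrt (1 + e1) + 1 - lam)\<^sup>2 * (1 + e2) - 1))"
    unfolding L_def .
qed

end
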